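(* Let $d\ge2$, let $\mathbb{F}_q$ have characteristic $p>d$, let $d_1\ge0$, $d_2\ge1$ with $d_1+d_2=d$, let $n\ge1$, and let $1\le P_1\le P_2$ be integers (with $P_1=P_2$ if $d_1=0$). Assume there exist $C_0\in\mathbb{F}_q^*$ and a non-singular form $f\in\mathbb{F}_q[x_1,\dots,x_n]$ of degree $d$ such that $G(\mathbf{x};\mathbf{y})=C_0\Gamma_f(\mathbf{x},\dots,\mathbf{x},\mathbf{y},\dots,\mathbf{y})$, with $\mathbf{x}$ in the first $d_1$ slots and $\mathbf{y}$ in the last $d_2$ slots. Let $\alpha\in\mathbb{T}$ and $\mathbf{Q}=(Q_1,Q_2)\in\mathbb{Z}_{\le0}^2$. Then $$N_2^{(0)}(Q_2;\alpha)\le q^{-d_1Q_1n}\,q^{-(d_2-1)Q_2n}\,N_1^{(d_1)}(\mathbf{Q};\alpha).$$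
   Context: $\mathbb{K}_\infty=\mathbb{F}_q((u^{-1}))$ with $|\alpha|=q^{\mathrm{ord}\,\alpha}$ ($\mathrm{ord}$ = largest exponent of $u$ with nonzero coefficient, $|0|=0$), $|\mathbf{x}|=\max_i|x_i|$; $\mathbb{T}=\{|\alpha|<1\}$; for $\alpha\in\mathbb{K}_\infty$, $\{\alpha\}\in\mathbb{T}$ is its fractional part (the sum of its terms $a_iu^i$ with $i\le-1$) and $\|\alpha\|=|\{\alpha\}|$. Writing $f(\mathbf{x})=\sum_{i_1,\dots,i_d}c_{i_1,\dots,i_d}x_{i_1}\cdots x_{i_d}$ with coefficients symmetric in the indices, $\Gamma_f(\mathbf{x}_1,\dots,\mathbf{x}_d)=\sum c_{i_1,\dots,i_d}x_{1,i_1}\cdots x_{d,i_d}$. Non-singular means $\nabla f$ has no common zero in $\overline{\mathbb{F}_q}^n$ except $\mathbf{0}$. Writing $G(\mathbf{x};\mathbf{y})=\sum_{\mathbf{j},\mathbf{k}}G_{\mathbf{j},\mathbf{k}}x_{j_1}\cdots x_{j_{d_1}}y_{k_1}\cdots y_{k_{d_2}}$ with $G_{\mathbf{j},\mathbf{k}}$ symmetric in $\mathbf{j}$ and in $\mathbf{k}$, set $\Gamma_G(\mathbf{x}_1,\dots,\mathbf{x}_{d_1};\mathbf{y}_1,\dots,\mathbf{y}_{d_2})=\sum G_{\mathbf{j},\mathbf{k}}x_{1,j_1}\cdots x_{d_1,j_{d_1}}y_{1,k_1}\cdots y_{d_2,k_{d_2}}$. Let $\mathbf{e}_i$ be the $i$-th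 unit vector, $\underline{\mathbf{x}}=(\mathbf{x}_1,\dots,\mathbf{x}_{d_1})\in\mathbb{F}_q[u]^{d_1n}$, $\underline{\mathbf{y}}'=(\mathbf{y}_1,\dots,\mathbf{y}_{d_2-1})\in\mathbb{F}_q[u]^{(d_2-1)n}$. Then $N_2^{(0)}(Q_2;\alpha)$ is the number of $(\underline{\mathbf{x}},\underline{\mathbf{y}}')$ with $|\mathbf{x}_i|<q^{P_1}$ for all $i$, $|\mathbf{y}_i|<q^{P_2}$ for all $i$, and $\|\alpha\Gamma_G(\underline{\mathbf{x}};\underline{\mathbf{y}}',\mathbf{e}_i)\|<q^{-P_2}$ for all $1\le i\le n$. $N_1^{(d_1)}(\mathbf{Q};\alpha)$ is the number of $(\underline{\mathbf{x}},\underline{\mathbf{y}}')$ with $|\mathbf{x}_i|<q^{Q_1+P_1}$ for all $i$, $|\mathbf{y}_i|<q^{Q_2+P_2}$ for all $i$, and $\|\alpha\Gamma_G(\underline{\mathbf{x}};\underline{\mathbf{y}}',\mathbf{e}_i)\|<q^{d_1Q_1+(d_2-1)Q_2-P_2}$ for all $1\le i\le n$. *)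

theory Defs
  imports "HOL-Algebra.Algebraic_Closure_Type"
begin

definition idx :: "nat \<Rightarrow> nat \<Rightarrow> nat list set" where
  "idx m n = {is. length is = m \<and> (\<forall>i\<in>set is. i < n)}"

(* A degree-d form in n variables, f(x) = sum c_{i_1..i_d} x_{i_1}...x_{i_d},
   given by its coefficient tensor c, symmetric in the indices. *)
definition sym_coeffs :: "nat \<Rightarrow> nat \<Rightarrow> (nat list \<Rightarrow> 'a) \<Rightarrow> bool" where
  "sym_coeffs d n c \<longleftrightarrow> (\<forall>is\<in>idx d n. \<forall>js\<in>idx d n. mset is = mset js \<longrightarrow> c is = c js)"

(* formal partial derivative d f / d x_j, evaluated at z (over any comm. ring 'b,
   coefficients mapped in by h) *)
definition form_partial ::
  "('a \<Rightarrow> 'b::comm_ring_1) \<Rightarrow> nat \<Rightarrow> nat \<Rightarrow> (nat list \<Rightarrow> 'a) \<Rightarrow> nat \<Rightarrow> (nat \<Rightarrow> 'b) \<Rightarrow> 'b" where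
  "form_partial h d n c j z =
     (\<Sum>is\<in>idx d n. h (c is) *
        (\<Sum>t\<in>{t. t < d \<and> is ! t = j}. (\<Prod>s\<in>{..<d} - {t}. z (is ! s))))"

definition nonsingular_form :: "nat \<Rightarrow> nat \<Rightarrow> (nat list \<Rightarrow> 'a::field) \<Rightarrow> bool" where
  "nonsingular_form d n c \<longleftrightarrow>
     (\<forall>z :: nat \<Rightarrow> 'a alg_closure.
        (\<forall>j<n. form_partial to_ac d n c j z = 0) \<longrightarrow> (\<forall>j<n. z j = 0))"

(* Gamma_G(x_1..x_{d1}; y_1..y_{d2}) for vectors of polynomials;
   Xv i j = j-th coordinate of x_{i+1}, Yv i j = j-th coordinate of y_{i+1} *)
definition GammaG ::
  "nat \<Rightarrow> nat \<Rightarrow> nat \<Rightarrow> (nat list \<Rightarrow> nat list \<Rightarrow> 'a::comm_ring_1)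
     \<Rightarrow> (nat \<Rightarrow> nat \<Rightarrow> 'a poly) \<Rightarrow> (nat \<Rightarrow> nat \<Rightarrow> 'a poly) \<Rightarrow> 'a poly" where
  "GammaG n d1 d2 Gc Xv Yv =
     (\<Sum>js\<in>idx d1 n. \<Sum>ks\<in>idx d2 n.
        smult (Gc js ks) ((\<Prod>t\<in>{..<d1}. Xv t (js ! t)) * (\<Prod>t\<in>{..<d2}. Yv t (ks ! t))))"

(* the tuple (y_1,...,y_{d2-1}, e_i) *)
definition ext_unit :: "nat \<Rightarrow> (nat \<Rightarrow> nat \<Rightarrow> 'a::comm_semiring_1 poly) \<Rightarrow> nat \<Rightarrow> nat \<Rightarrow> nat \<Rightarrow> 'a poly" where
  "ext_unit d2 Yv i = (\<lambda>t j. if t < d2 - 1 then Yv t j else if j = i then 1 else 0)"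

(* Elements of T = {|alpha|<1} in F_q((u^-1)): alpha k = coefficient of u^k,
   with alpha k = 0 for k >= 0. *)
definition in_T :: "(int \<Rightarrow> 'a::zero) \<Rightarrow> bool" where
  "in_T \<alpha> \<longleftrightarrow> (\<forall>k\<ge>0. \<alpha> k = 0)"

(* coefficient of u^k in alpha * g, for g in F_q[u] *)
definition ser_poly_mult :: "(int \<Rightarrow> 'a::comm_semiring_1) \<Rightarrow> 'a poly \<Rightarrow> int \<Rightarrow> 'a" where
  "ser_poly_mult \<alpha> g k = (\<Sum>j\<le>degree g. coeff g j * \<alpha> (k - int j))"

(* ||alpha*g|| < q^e : all coefficients of u^k, e <= k <= -1, of alpha*g vanish *)
definition fnorm_lt :: "(int \<Rightarrow> 'a::comm_semiring_1) \<Rightarrow> 'a poly \<Rightarrow> int \<Rightarrow> bool" where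
  "fnorm_lt \<alpha> g e \<longleftrightarrow> (\<forall>k. e \<le> k \<and> k \<le> -1 \<longrightarrow> ser_poly_mult \<alpha> g k = 0)"

(* m vectors in F_q[u]^n, each with |x_i| < q^B (so for B <= 0 only zero) *)
definition vecs_bounded :: "nat \<Rightarrow> nat \<Rightarrow> int \<Rightarrow> (nat \<Rightarrow> nat \<Rightarrow> 'a::zero poly) \<Rightarrow> bool" where
  "vecs_bounded m n B Xv \<longleftrightarrow>
     (\<forall>i j. (m \<le> i \<or> n \<le> j) \<longrightarrow> Xv i j = 0) \<and>
     (\<forall>i<m. \<forall>j<n. Xv i j = 0 \<or> int (degree (Xv i j)) < B)"

definition count_N ::
  "nat \<Rightarrow> nat \<Rightarrow> nat \<Rightarrow> (nat list \<Rightarrow> nat list \<Rightarrow> 'a::comm_ring_1) \<Rightarrow> (int \<Rightarrow> 'a)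
     \<Rightarrow> int \<Rightarrow> int \<Rightarrow> int \<Rightarrow> nat" where
  "count_N n d1 d2 Gc \<alpha> B1 B2 E = card {(Xv, Yv).
      vecs_bounded d1 n B1 Xv \<and> vecs_bounded (d2 - 1) n B2 Yv \<and>
      (\<forall>i<n. fnorm_lt \<alpha> (GammaG n d1 d2 Gc Xv (ext_unit d2 Yv i)) E)}"

definition N2_0 ::
  "nat \<Rightarrow> nat \<Rightarrow> nat \<Rightarrow> (nat list \<Rightarrow> nat list \<Rightarrow> 'a::comm_ring_1) \<Rightarrow> int \<Rightarrow> int \<Rightarrow> (int \<Rightarrow> 'a) \<Rightarrow> nat" where
  "N2_0 n d1 d2 Gc P1 P2 \<alpha> = count_N n d1 d2 Gc \<alpha> P1 P2 (- P2)"

definition N1_d1 ::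
  "nat \<Rightarrow> nat \<Rightarrow> nat \<Rightarrow> (nat list \<Rightarrow> nat list \<Rightarrow> 'a::comm_ring_1) \<Rightarrow> int \<Rightarrow> int \<Rightarrow> int \<Rightarrow> int
     \<Rightarrow> (int \<Rightarrow> 'a) \<Rightarrow> nat" where
  "N1_d1 n d1 d2 Gc P1 P2 Q1 Q2 \<alpha> =
     count_N n d1 d2 Gc \<alpha> (Q1 + P1) (Q2 + P2) (int d1 * Q1 + (int d2 - 1) * Q2 - P2)"

end

(*
  Davenport's shrinking argument over F_q(u).  The tensor of G is C_0 times that of f, and C_0 <> 0
  does not affect the conditions, so everything is phrased with Gamma_f, whose m = d_1 + d_2 - 1
  free vector slots hold x_1, ..., x_{d_1}, y_1, ..., y_{d_2 - 1} and whose last slot holds e_i.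
  Freezing all free slots but one, the conditions read |v| < q^A and ||alpha (g v)_i|| < q^(-B)
  for a matrix g that is symmetric, since exchanging the free slot with the slot of e_i is a
  symmetry of the symmetric tensor.  For such a system the linear map sending v to its
  coefficients of u^(A-1) and to the coefficients of u^(-B-1) in alpha g v has an isotropic
  image for the standard symplectic form on F_q^(2n), hence at most q^n values, and its fibres
  are translates of the set for (A - 1, B + 1).  Each such step costs a factor q^n; it is taken
  -Q_1 times for every x-slot and -Q_2 times for every free y-slot.
*)

theory Submission
  imports Defs "HOL-Library.Function_Algebras" "HOL-Library.Product_Plus" "HOL-Combinatorics.Permutations"
begin

section \<open>Coefficients of \<open>\<alpha>\<close> times a polynomial\<close>

lemma ser_poly_mult_eq_sum:
  fixes g :: "'a::comm_semiring_1 poly"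
  assumes "degree g < N"
  shows "ser_poly_mult \<alpha> g k = (\<Sum>j<N. coeff g j * \<alpha> (k - int j))"
  unfolding ser_poly_mult_def
  by (rule sum.mono_neutral_left) (use assms in \<open>auto simp: coeff_eq_0\<close>)

lemma ser_poly_mult_0 [simp]: "ser_poly_mult \<alpha> 0 k = 0"
  by (simp add: ser_poly_mult_def)

lemma ser_poly_mult_add:
  fixes g h :: "'a::comm_semiring_1 poly"
  shows "ser_poly_mult \<alpha> (g + h) k = ser_poly_mult \<alpha> g k + ser_poly_mult \<alpha> h k"
proof -
  define N where "N = Suc (max (degree g) (degree h))"
  have "degree (g + h) < N"
    using degree_add_le_max[of g h] by (simp add: N_def)
  then show ?thesis
    by (simp add: ser_poly_mult_eq_sum[of _ N] N_def sum.distrib algebra_simps)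
qed

lemma ser_poly_mult_diff:
  fixes g h :: "'a::comm_ring_1 poly"
  shows "ser_poly_mult \<alpha> (g - h) k = ser_poly_mult \<alpha> g k - ser_poly_mult \<alpha> h k"
proof -
  define N where "N = Suc (max (degree g) (degree h))"
  have "degree (g - h) < N"
    using degree_diff_le_max[of g h] by (simp add: N_def)
  then show ?thesis
    by (simp add: ser_poly_mult_eq_sum[of _ N] N_def sum_subtractf algebra_simps)
qed

lemma ser_poly_mult_smult:
  fixes g :: "'a::comm_semiring_1 poly"
  shows "ser_poly_mult \<alpha> (smult a g) k = a * ser_poly_mult \<alpha> g k"
  using degree_smult_le[of a g]
  by (simp add: ser_poly_mult_eq_sum[of _ "Suc (degree g)"] sum_distrib_left mult.assoc
      del: sum.lessThan_Suc)

lemma ser_poly_mult_sum: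
  fixes f :: "'i \<Rightarrow> 'a::comm_semiring_1 poly"
  shows "ser_poly_mult \<alpha> (\<Sum>i\<in>I. f i) k = (\<Sum>i\<in>I. ser_poly_mult \<alpha> (f i) k)"
  by (induction I rule: infinite_finite_induct) (auto simp: ser_poly_mult_add)

lemma ser_poly_mult_pCons:
  fixes g :: "'a::comm_semiring_1 poly"
  shows "ser_poly_mult \<alpha> (pCons a g) k = a * \<alpha> k + ser_poly_mult \<alpha> g (k - 1)"
proof -
  have "degree (pCons a g) < Suc (Suc (degree g))"
    using degree_pCons_le[of a g] by simp
  then have "ser_poly_mult \<alpha> (pCons a g) k
      = (\<Sum>j<Suc (Suc (degree g)). coeff (pCons a g) j * \<alpha> (k - int j))"
    by (rule ser_poly_mult_eq_sum)
  also have "\<dots> = a * \<alpha> k + (\<Sum>j<Suc (degree g). coeff g j * \<alpha> (k - 1 - int j))"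
    by (subst sum.lessThan_Suc_shift) (simp add: algebra_simps)
  also have "(\<Sum>j<Suc (degree g). coeff g j * \<alpha> (k - 1 - int j)) = ser_poly_mult \<alpha> g (k - 1)"
    by (rule ser_poly_mult_eq_sum[symmetric]) simp
  finally show ?thesis .
qed

text \<open>\<open>deg_lt p A\<close> is \<open>|p| < q\<^sup>A\<close>.\<close>

definition deg_lt :: "'a::zero poly \<Rightarrow> int \<Rightarrow> bool" where
  "deg_lt p A \<longleftrightarrow> (\<forall>k. A \<le> int k \<longrightarrow> coeff p k = 0)"

lemma deg_lt_iff: "deg_lt p A \<longleftrightarrow> p = 0 \<or> int (degree p) < A"
proof
  assume p: "deg_lt p A"
  show "p = 0 \<or> int (degree p) < A"
  proof (rule ccontr)
    assume "\<not> (p = 0 \<or> int (degree p) < A)"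
    then show False
      using p leading_coeff_neq_0[of p] by (auto simp: deg_lt_def)
  qed
qed (auto simp: deg_lt_def coeff_eq_0)

lemma deg_lt_0 [simp]: "deg_lt 0 A"
  by (simp add: deg_lt_def)

lemma deg_lt_add: "deg_lt p A \<Longrightarrow> deg_lt q A \<Longrightarrow> deg_lt (p + q) A"
  by (simp add: deg_lt_def)

lemma deg_lt_diff: "deg_lt p A \<Longrightarrow> deg_lt q A \<Longrightarrow> deg_lt (p - q :: 'a::ab_group_add poly) A"
  by (simp add: deg_lt_def)

lemma deg_lt_smult: "deg_lt p A \<Longrightarrow> deg_lt (smult c p) A"
  by (simp add: deg_lt_def)

lemma deg_lt_nonpos: "A \<le> 0 \<Longrightarrow> deg_lt p A \<longleftrightarrow> p = 0"
  by (auto simp: deg_lt_def poly_eq_iff)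

lemma deg_lt_minus_one:
  assumes "deg_lt p A" and "coeff p (nat (A - 1)) = 0"
  shows "deg_lt p (A - 1)"
  unfolding deg_lt_def
proof (intro allI impI)
  fix k assume "A - 1 \<le> int k"
  then consider "A \<le> int k" | "k = nat (A - 1)" by linarith
  then show "coeff p k = 0"
    by cases (use assms in \<open>auto simp: deg_lt_def\<close>)
qed

lemma finite_deg_lt: "finite {p :: 'a::{finite,zero} poly. deg_lt p A}"
proof -
  have "{p :: 'a poly. deg_lt p A}
      \<subseteq> coeff -` {f. \<forall>k. (k \<in> {..<nat A} \<longrightarrow> f k \<in> UNIV) \<and> (k \<notin> {..<nat A} \<longrightarrow> f k = 0)}"
    by (auto simp: deg_lt_def)
  moreover have "finite ((coeff :: 'a poly \<Rightarrow> _) -` {f. \<forall>k. (k \<in> {..<nat A} \<longrightarrow> f k \<in> UNIV) \<and> (k \<notin> {..<nat A} \<longrightarrow> f k = 0)})"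
    by (intro finite_vimageI finite_set_of_finite_funs injI) (auto simp: poly_eq_iff finite_UNIV)
  ultimately show ?thesis
    by (rule finite_subset)
qed

lemma ser_poly_mult_mult:
  fixes p h :: "'a::comm_semiring_1 poly"
  assumes "deg_lt p (int N)"
  shows "ser_poly_mult \<alpha> (p * h) r = (\<Sum>k<N. coeff p k * ser_poly_mult \<alpha> h (r - int k))"
  using assms
proof (induction p arbitrary: N r)
  case 0
  then show ?case by simp
next
  case (pCons a p)
  show ?case
  proof (cases N)
    case 0
    then have "pCons a p = 0"
      using pCons.prems by (simp add: deg_lt_nonpos)
    then show ?thesis using 0 by simp
  next
    case (Suc N')
    have p: "deg_lt p (int N')"
      unfolding deg_lt_def
    proof (intro allI impI)
      fix k assume "int N' \<le> int k"
      then show "coeff p k = 0"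
        using pCons.prems Suc by (auto simp: deg_lt_def dest: spec[of _ "Suc k"])
    qed
    have "ser_poly_mult \<alpha> (pCons a p * h) r = a * ser_poly_mult \<alpha> h r + ser_poly_mult \<alpha> (p * h) (r - 1)"
      by (simp add: ser_poly_mult_add ser_poly_mult_smult ser_poly_mult_pCons)
    also have "\<dots> = a * ser_poly_mult \<alpha> h r + (\<Sum>k<N'. coeff p k * ser_poly_mult \<alpha> h (r - 1 - int k))"
      using pCons.IH[OF p] by simp
    also have "\<dots> = (\<Sum>k<N. coeff (pCons a p) k * ser_poly_mult \<alpha> h (r - int k))"
      unfolding Suc by (subst sum.lessThan_Suc_shift) (simp add: algebra_simps)
    finally show ?thesis .
  qed
qed

section \<open>Counting in finite vector spaces\<close>

lemma card_le_card_image_mult_card: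
  fixes S :: "'v::ab_group_add set" and \<Phi> :: "'v \<Rightarrow> 'w"
  assumes "finite K" and "\<And>x y. x \<in> S \<Longrightarrow> y \<in> S \<Longrightarrow> \<Phi> x = \<Phi> y \<Longrightarrow> x - y \<in> K"
  shows "card S \<le> card (\<Phi> ` S) * card K"
proof (cases "finite S")
  case True
  define rep where "rep = inv_into S \<Phi>"
  have "inj_on (\<lambda>x. (\<Phi> x, x - rep (\<Phi> x))) S"
    by (rule inj_onI) auto
  moreover have "(\<lambda>x. (\<Phi> x, x - rep (\<Phi> x))) ` S \<subseteq> \<Phi> ` S \<times> K"
    using assms(2) by (auto simp: rep_def inv_into_into f_inv_into_f)
  ultimately have "card S \<le> card (\<Phi> ` S \<times> K)"
    using True assms(1) by (intro card_inj_on_le) auto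
  then show ?thesis
    by (simp add: card_cartesian_product)
qed simp

definition coord_space :: "nat \<Rightarrow> (nat \<Rightarrow> 'a::zero) set" where
  "coord_space n = {u. \<forall>i\<ge>n. u i = 0}"

definition orthogonal_compl :: "nat \<Rightarrow> (nat \<Rightarrow> 'a::comm_semiring_1) set \<Rightarrow> (nat \<Rightarrow> 'a) set" where
  "orthogonal_compl n U = {y \<in> coord_space n. \<forall>u\<in>U. (\<Sum>i<n. u i * y i) = 0}"

lemma finite_coord_space: "finite (coord_space n :: (nat \<Rightarrow> 'a::{finite,zero}) set)"
proof -
  have "coord_space n = {u :: nat \<Rightarrow> 'a. \<forall>i. (i \<in> {..<n} \<longrightarrow> u i \<in> UNIV) \<and> (i \<notin> {..<n} \<longrightarrow> u i = 0)}"
    by (auto simp: coord_space_def)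
  then show ?thesis
    using finite_set_of_finite_funs[of "{..<n}" "UNIV :: 'a set" 0] by simp
qed

lemma finite_orthogonal_compl: "finite (orthogonal_compl n U :: (nat \<Rightarrow> 'a::{finite,comm_semiring_1}) set)"
  by (rule finite_subset[OF _ finite_coord_space]) (auto simp: orthogonal_compl_def)

lemma card_coord_space_0: "card (coord_space 0 :: (nat \<Rightarrow> 'a::zero) set) = 1"
proof -
  have "coord_space 0 = {0 :: nat \<Rightarrow> 'a}"
    by (auto simp: coord_space_def)
  then show ?thesis by simp
qed

lemma fun_upd_in_orthogonal_compl:
  assumes "y \<in> orthogonal_compl (Suc n) U"
  shows "y(n := 0) \<in> orthogonal_compl n {u \<in> U. u n = 0}"
  unfolding orthogonal_compl_def
proof (intro CollectI conjI ballI)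
  show "y(n := 0) \<in> coord_space n"
    using assms by (auto simp: orthogonal_compl_def coord_space_def)
  fix u assume "u \<in> {u \<in> U. u n = 0}"
  then have "(\<Sum>i<n. u i * (y(n := 0)) i) = (\<Sum>i<Suc n. u i * y i)"
    by simp
  also have "\<dots> = 0"
    using assms \<open>u \<in> {u \<in> U. u n = 0}\<close> by (auto simp: orthogonal_compl_def)
  finally show "(\<Sum>i<n. u i * (y(n := 0)) i) = 0" .
qed

lemma card_orthogonal_compl_Suc_le:
  fixes U :: "(nat \<Rightarrow> 'a::{finite,comm_semiring_1}) set"
  shows "card (orthogonal_compl (Suc n) U) \<le> card (UNIV :: 'a set) * card (orthogonal_compl n {u \<in> U. u n = 0})"
proof -
  have "card (orthogonal_compl (Suc n) U) \<le> card ((UNIV :: 'a set) \<times> orthogonal_compl n {u \<in> U. u n = 0})"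
  proof (rule card_inj_on_le)
    show "inj_on (\<lambda>y. (y n, y(n := 0))) (orthogonal_compl (Suc n) U)"
      by (rule inj_onI) (metis fun_upd_triv fun_upd_upd prod.inject)
  qed (auto simp: fun_upd_in_orthogonal_compl finite_orthogonal_compl)
  then show ?thesis
    by (simp add: card_cartesian_product)
qed

lemma card_orthogonal_compl_Suc_le_pivot:
  fixes U :: "(nat \<Rightarrow> 'a::{finite,comm_ring_1}) set"
  assumes "p \<in> U" and "p n = 1"
  shows "card (orthogonal_compl (Suc n) U) \<le> card (orthogonal_compl n {u \<in> U. u n = 0})"
proof (rule card_inj_on_le)
  show "inj_on (\<lambda>y. y(n := 0)) (orthogonal_compl (Suc n) U)"
  proof (rule inj_onI)
    fix y z assume y: "y \<in> orthogonal_compl (Suc n) U" and z: "z \<in> orthogonal_compl (Suc n) U"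
      and eq: "y(n := 0) = z(n := 0)"
    have "y i = z i" if "i < n" for i
      using fun_cong[OF eq, of i] that by simp
    moreover have "(\<Sum>i<Suc n. p i * y i) = 0" "(\<Sum>i<Suc n. p i * z i) = 0"
      using y z assms(1) by (auto simp: orthogonal_compl_def)
    ultimately have "y n = z n"
      using assms(2) by (simp add: eq_neg_iff_add_eq_0[symmetric])
    then show "y = z"
      using eq by (metis fun_upd_triv fun_upd_upd)
  qed
qed (auto simp: fun_upd_in_orthogonal_compl finite_orthogonal_compl)

lemma card_le_card_pivot_kernel:
  fixes U :: "(nat \<Rightarrow> 'a::{finite,comm_ring_1}) set"
  assumes add: "\<And>u v. u \<in> U \<Longrightarrow> v \<in> U \<Longrightarrow> u + v \<in> U"
    and scale: "\<And>c u. u \<in> U \<Longrightarrow> (\<lambda>i. c * u i) \<in> U"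
    and "p \<in> U" and "p n = 1"
  shows "card U \<le> card (UNIV :: 'a set) * card {u \<in> U. u n = 0}"
proof (cases "finite U")
  case True
  define \<pi> where "\<pi> u = u + (\<lambda>i. - u n * p i)" for u :: "nat \<Rightarrow> 'a"
  have "card U \<le> card ((UNIV :: 'a set) \<times> {u \<in> U. u n = 0})"
  proof (rule card_inj_on_le)
    show "inj_on (\<lambda>u. (u n, \<pi> u)) U"
      by (rule inj_onI) (auto simp: \<pi>_def fun_eq_iff)
    have "\<pi> u \<in> U" if "u \<in> U" for u
      unfolding \<pi>_def using that assms(3) by (intro add scale)
    moreover have "\<pi> u n = 0" for u
      using assms(4) by (simp add: \<pi>_def)
    ultimately show "(\<lambda>u. (u n, \<pi> u)) ` U \<subseteq> UNIV \<times> {u \<in> U. u n = 0}"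
      by auto
  qed (use True in simp)
  then show ?thesis
    by (simp add: card_cartesian_product)
qed simp

lemma card_mult_card_orthogonal_compl_Suc_le:
  fixes U :: "(nat \<Rightarrow> 'a::{finite,field}) set" and n :: nat
  assumes "\<And>u v. u \<in> U \<Longrightarrow> v \<in> U \<Longrightarrow> u + v \<in> U"
    and "\<And>c u. u \<in> U \<Longrightarrow> (\<lambda>i. c * u i) \<in> U"
  defines "U0 \<equiv> {u \<in> U. u n = 0}"
  shows "card U * card (orthogonal_compl (Suc n) U)
      \<le> card (UNIV :: 'a set) * (card U0 * card (orthogonal_compl n U0))"
proof (cases "\<forall>u\<in>U. u n = 0")
  case True
  then have "U0 = U"
    by (auto simp: U0_def)
  then show ?thesis
    using card_orthogonal_compl_Suc_le[of n U] by (simp add: U0_def mult.left_commute)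
next
  case False
  then obtain u where u: "u \<in> U" "u n \<noteq> 0"
    by auto
  define p where "p = (\<lambda>i. inverse (u n) * u i)"
  have p: "p \<in> U" "p n = 1"
    unfolding p_def using u by (auto intro: assms(2))
  have "card U * card (orthogonal_compl (Suc n) U)
      \<le> (card (UNIV :: 'a set) * card U0) * card (orthogonal_compl n U0)"
    unfolding U0_def using assms(1,2) p
    by (intro mult_le_mono card_le_card_pivot_kernel card_orthogonal_compl_Suc_le_pivot)
  then show ?thesis
    by (simp add: mult.assoc)
qed

lemma card_mult_card_orthogonal_compl_le:
  fixes U :: "(nat \<Rightarrow> 'a::{finite,field}) set"
  assumes "U \<subseteq> coord_space n"
    and "\<And>u v. u \<in> U \<Longrightarrow> v \<in> U \<Longrightarrow> u + v \<in> U"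
    and "\<And>c u. u \<in> U \<Longrightarrow> (\<lambda>i. c * u i) \<in> U"
  shows "card U * card (orthogonal_compl n U) \<le> card (UNIV :: 'a set) ^ n"
  using assms
proof (induction n arbitrary: U)
  case 0
  have "orthogonal_compl 0 U \<subseteq> coord_space 0"
    by (auto simp: orthogonal_compl_def)
  then have "card U \<le> 1" and "card (orthogonal_compl 0 U) \<le> 1"
    using 0(1) card_mono[OF finite_coord_space] by (metis card_coord_space_0)+
  then show ?case
    using mult_le_mono[of _ 1 _ 1] by simp
next
  case (Suc n)
  define U0 where "U0 = {u \<in> U. u n = 0}"
  have "U0 \<subseteq> coord_space n"
  proof
    fix u assume u: "u \<in> U0"
    have "u i = 0" if "n \<le> i" for i
      using u Suc.prems(1) that by (cases "i = n") (auto simp: U0_def coord_space_def)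
    then show "u \<in> coord_space n"
      by (simp add: coord_space_def)
  qed
  moreover have "u + v \<in> U0" if "u \<in> U0" "v \<in> U0" for u v
    using that by (auto simp: U0_def intro: Suc.prems(2))
  moreover have "(\<lambda>i. c * u i) \<in> U0" if "u \<in> U0" for c u
    using that Suc.prems(3) by (simp add: U0_def)
  ultimately have "card U0 * card (orthogonal_compl n U0) \<le> card (UNIV :: 'a set) ^ n"
    by (rule Suc.IH)
  moreover have "card U * card (orthogonal_compl (Suc n) U)
      \<le> card (UNIV :: 'a set) * (card U0 * card (orthogonal_compl n U0))"
    unfolding U0_def using Suc.prems(2,3) by (rule card_mult_card_orthogonal_compl_Suc_le)
  ultimately show ?case
    by (simp add: le_trans)
qed

lemma card_isotropic_kernel_le:
  fixes W :: "((nat \<Rightarrow> 'a::{finite,comm_semiring_1}) \<times> (nat \<Rightarrow> 'a)) set"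
  assumes "W \<subseteq> coord_space n \<times> coord_space n"
    and "\<And>w v. w \<in> W \<Longrightarrow> v \<in> W \<Longrightarrow> (\<Sum>i<n. fst w i * snd v i) = (\<Sum>i<n. fst v i * snd w i)"
  shows "card {w \<in> W. fst w = 0} \<le> card (orthogonal_compl n (fst ` W))"
proof (rule card_inj_on_le)
  show "inj_on snd {w \<in> W. fst w = 0}"
    by (rule inj_onI) (auto simp: prod_eq_iff)
  show "snd ` {w \<in> W. fst w = 0} \<subseteq> orthogonal_compl n (fst ` W)"
  proof (rule image_subsetI)
    fix w assume w: "w \<in> {w \<in> W. fst w = 0}"
    have "(\<Sum>i<n. fst v i * snd w i) = 0" if "v \<in> W" for v
      using assms(2)[of w v] w that by simp
    moreover have "snd w \<in> coord_space n"
      using w assms(1) by auto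
    ultimately show "snd w \<in> orthogonal_compl n (fst ` W)"
      by (auto simp: orthogonal_compl_def)
  qed
qed (rule finite_orthogonal_compl)

lemma card_isotropic_le:
  fixes W :: "((nat \<Rightarrow> 'a::{finite,field}) \<times> (nat \<Rightarrow> 'a)) set"
  assumes sub: "W \<subseteq> coord_space n \<times> coord_space n"
    and add: "\<And>w v. w \<in> W \<Longrightarrow> v \<in> W \<Longrightarrow> w + v \<in> W"
    and scale: "\<And>c w. w \<in> W \<Longrightarrow> ((\<lambda>i. c * fst w i), (\<lambda>i. c * snd w i)) \<in> W"
    and iso: "\<And>w v. w \<in> W \<Longrightarrow> v \<in> W \<Longrightarrow> (\<Sum>i<n. fst w i * snd v i) = (\<Sum>i<n. fst v i * snd w i)"
  shows "card W \<le> card (UNIV :: 'a set) ^ n"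
proof -
  define K where "K = {w \<in> W. fst w = 0}"
  have diff: "w - v \<in> W" if "w \<in> W" "v \<in> W" for w v
  proof -
    have "w + ((\<lambda>i. -1 * fst v i), (\<lambda>i. -1 * snd v i)) \<in> W"
      using that by (intro add scale)
    also have "w + ((\<lambda>i. -1 * fst v i), (\<lambda>i. -1 * snd v i)) = w - v"
      by (simp add: prod_eq_iff fun_eq_iff)
    finally show ?thesis .
  qed
  have "finite W"
    using sub by (rule finite_subset) (simp add: finite_coord_space)
  then have "card W \<le> card (fst ` W) * card K"
    by (intro card_le_card_image_mult_card) (auto simp: K_def diff)
  also have "card K \<le> card (orthogonal_compl n (fst ` W))"
    unfolding K_def using sub iso by (rule card_isotropic_kernel_le)
  then have "card (fst ` W) * card K \<le> card (fst ` W) * card (orthogonal_compl n (fst ` W))"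
    by simp
  also have "\<dots> \<le> card (UNIV :: 'a set) ^ n"
  proof (rule card_mult_card_orthogonal_compl_le)
    show "fst ` W \<subseteq> coord_space n"
      using sub by auto
    show "u + v \<in> fst ` W" if "u \<in> fst ` W" "v \<in> fst ` W" for u v
    proof -
      from that(1) obtain w where "u = fst w" "w \<in> W" ..
      moreover from that(2) obtain w' where "v = fst w'" "w' \<in> W" ..
      ultimately show ?thesis
        using add[of w w'] by (simp add: rev_image_eqI)
    qed
    show "(\<lambda>i. c * u i) \<in> fst ` W" if "u \<in> fst ` W" for c u
    proof -
      from that obtain w where "u = fst w" "w \<in> W" ..
      then show ?thesis
        using scale[of w c] by (simp add: rev_image_eqI)
    qed
  qed
  finally show ?thesis .
qed

section \<open>Davenport's shrinking step\<close>

lemma smult_sum_distrib: "smult c (\<Sum>i\<in>I. f i) = (\<Sum>i\<in>I. smult c (f i))"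
  by (induction I rule: infinite_finite_induct) (simp_all add: smult_add_right)

definition bounded_vecs :: "nat \<Rightarrow> int \<Rightarrow> (nat \<Rightarrow> 'a::zero poly) set" where
  "bounded_vecs n A = {v. (\<forall>j\<ge>n. v j = 0) \<and> (\<forall>j<n. deg_lt (v j) A)}"

definition approx_vecs ::
  "nat \<Rightarrow> (int \<Rightarrow> 'a::comm_semiring_1) \<Rightarrow> (nat \<Rightarrow> nat \<Rightarrow> 'a poly) \<Rightarrow> int \<Rightarrow> int \<Rightarrow> (nat \<Rightarrow> 'a poly) set"
where
  "approx_vecs n \<alpha> g A B = {v \<in> bounded_vecs n A. \<forall>i<n. fnorm_lt \<alpha> (\<Sum>j<n. v j * g i j) (- B)}"

lemma finite_bounded_vecs: "finite (bounded_vecs n A :: (nat \<Rightarrow> 'a::{finite,zero} poly) set)"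
proof (rule finite_subset)
  show "bounded_vecs n A
      \<subseteq> {v. \<forall>j. (j \<in> {..<n} \<longrightarrow> v j \<in> {p. deg_lt p A}) \<and> (j \<notin> {..<n} \<longrightarrow> v j = 0)}"
    by (auto simp: bounded_vecs_def)
qed (intro finite_set_of_finite_funs finite_lessThan finite_deg_lt)

lemma finite_approx_vecs: "finite (approx_vecs n \<alpha> g A B :: (nat \<Rightarrow> 'a::{finite,comm_semiring_1} poly) set)"
  using finite_bounded_vecs by (rule finite_subset[rotated]) (auto simp: approx_vecs_def)

lemma zero_in_approx_vecs: "0 \<in> approx_vecs n \<alpha> g A B"
  by (simp add: approx_vecs_def bounded_vecs_def fnorm_lt_def)

lemma approx_vecs_add:
  fixes v w :: "nat \<Rightarrow> 'a::comm_semiring_1 poly"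
  assumes "v \<in> approx_vecs n \<alpha> g A B" and "w \<in> approx_vecs n \<alpha> g A B"
  shows "v + w \<in> approx_vecs n \<alpha> g A B"
  using assms
  by (simp add: approx_vecs_def bounded_vecs_def fnorm_lt_def deg_lt_add distrib_right
      sum.distrib ser_poly_mult_add)

lemma approx_vecs_smult:
  fixes v :: "nat \<Rightarrow> 'a::comm_semiring_1 poly"
  assumes "v \<in> approx_vecs n \<alpha> g A B"
  shows "(\<lambda>j. smult c (v j)) \<in> approx_vecs n \<alpha> g A B"
  using assms
  by (simp add: approx_vecs_def bounded_vecs_def fnorm_lt_def deg_lt_smult
      flip: smult_sum_distrib add: ser_poly_mult_smult)

text \<open>The data lost in passing from \<open>(A, B)\<close> to \<open>(A - 1, B + 1)\<close>: the coefficients of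
  \<open>u\<^sup>A\<^sup>-\<^sup>1\<close> in \<open>v\<close> and of \<open>u\<^sup>-\<^sup>B\<^sup>-\<^sup>1\<close> in \<open>\<alpha> g v\<close>.\<close>

definition leading_data ::
  "nat \<Rightarrow> (int \<Rightarrow> 'a::comm_semiring_1) \<Rightarrow> (nat \<Rightarrow> nat \<Rightarrow> 'a poly) \<Rightarrow> int \<Rightarrow> int
     \<Rightarrow> (nat \<Rightarrow> 'a poly) \<Rightarrow> (nat \<Rightarrow> 'a) \<times> (nat \<Rightarrow> 'a)"
where
  "leading_data n \<alpha> g A B v =
     ((\<lambda>i. if i < n then coeff (v i) (nat (A - 1)) else 0),
      (\<lambda>i. if i < n then ser_poly_mult \<alpha> (\<Sum>j<n. v j * g i j) (- B - 1) else 0))"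

lemma leading_data_in_coord_space:
  "leading_data n \<alpha> g A B v \<in> coord_space n \<times> coord_space n"
  by (simp add: leading_data_def coord_space_def)

lemma leading_data_add:
  fixes v w :: "nat \<Rightarrow> 'a::comm_semiring_1 poly"
  shows "leading_data n \<alpha> g A B (v + w) = leading_data n \<alpha> g A B v + leading_data n \<alpha> g A B w"
  by (simp add: leading_data_def fun_eq_iff distrib_right sum.distrib ser_poly_mult_add)

lemma leading_data_smult:
  fixes v :: "nat \<Rightarrow> 'a::comm_semiring_1 poly"
  shows "leading_data n \<alpha> g A B (\<lambda>j. smult c (v j))
      = ((\<lambda>i. c * fst (leading_data n \<alpha> g A B v) i), (\<lambda>i. c * snd (leading_data n \<alpha> g A B v) i))"
  by (simp add: leading_data_def fun_eq_iff ser_poly_mult_smult flip: smult_sum_distrib)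

lemma leading_data_eq_imp_diff_mem:
  fixes x y :: "nat \<Rightarrow> 'a::comm_ring_1 poly"
  assumes x: "x \<in> approx_vecs n \<alpha> g A B" and y: "y \<in> approx_vecs n \<alpha> g A B"
    and eq: "leading_data n \<alpha> g A B x = leading_data n \<alpha> g A B y"
  shows "x - y \<in> approx_vecs n \<alpha> g (A - 1) (B + 1)"
proof -
  have top: "coeff (x j) (nat (A - 1)) = coeff (y j) (nat (A - 1))" if "j < n" for j
    using fun_cong[OF arg_cong[OF eq, of fst], of j] that by (simp add: leading_data_def)
  have low: "ser_poly_mult \<alpha> (\<Sum>j<n. x j * g i j) (- B - 1) = ser_poly_mult \<alpha> (\<Sum>j<n. y j * g i j) (- B - 1)"
    if "i < n" for i
    using fun_cong[OF arg_cong[OF eq, of snd], of i] that by (simp add: leading_data_def)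
  have "x - y \<in> bounded_vecs n (A - 1)"
    unfolding bounded_vecs_def
  proof (intro CollectI conjI allI impI)
    fix j assume "n \<le> j"
    then show "(x - y) j = 0"
      using x y by (simp add: approx_vecs_def bounded_vecs_def)
  next
    fix j assume "j < n"
    then show "deg_lt ((x - y) j) (A - 1)"
      using x y top[of j] by (intro deg_lt_minus_one) (auto simp: approx_vecs_def bounded_vecs_def deg_lt_diff)
  qed
  moreover have "fnorm_lt \<alpha> (\<Sum>j<n. (x - y) j * g i j) (- (B + 1))" if "i < n" for i
  proof -
    have "ser_poly_mult \<alpha> (\<Sum>j<n. x j * g i j) k = ser_poly_mult \<alpha> (\<Sum>j<n. y j * g i j) k"
      if "- B - 1 \<le> k" "k \<le> -1" for k
      using x y low[OF \<open>i < n\<close>] \<open>i < n\<close> that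
      by (cases "k = - B - 1") (auto simp: approx_vecs_def fnorm_lt_def)
    then show ?thesis
      by (simp add: fnorm_lt_def left_diff_distrib sum_subtractf ser_poly_mult_diff)
  qed
  ultimately show ?thesis
    by (simp add: approx_vecs_def)
qed

text \<open>Only the top coefficient of \<open>v\<^sub>i\<close> contributes: the lower ones meet the coefficients of
  \<open>\<alpha> g w\<close> in degrees \<open>-B, \<dots>, -1\<close>, which vanish.\<close>

lemma approx_vecs_pairing:
  fixes v w :: "nat \<Rightarrow> 'a::comm_semiring_1 poly"
  assumes "1 \<le> A" and "A \<le> B"
    and v: "v \<in> bounded_vecs n A" and w: "w \<in> approx_vecs n \<alpha> g A B"
  shows "ser_poly_mult \<alpha> (\<Sum>i<n. v i * (\<Sum>j<n. w j * g i j)) (A - B - 2)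
       = (\<Sum>i<n. coeff (v i) (nat (A - 1)) * ser_poly_mult \<alpha> (\<Sum>j<n. w j * g i j) (- B - 1))"
proof (subst ser_poly_mult_sum, rule sum.cong[OF refl])
  fix i assume "i \<in> {..<n}"
  define a where "a = nat (A - 1)"
  let ?h = "\<Sum>j<n. w j * g i j"
  have "deg_lt (v i) (int (Suc a))"
    using v \<open>1 \<le> A\<close> \<open>i \<in> {..<n}\<close> by (simp add: bounded_vecs_def a_def)
  then have "ser_poly_mult \<alpha> (v i * ?h) (A - B - 2)
      = (\<Sum>k<Suc a. coeff (v i) k * ser_poly_mult \<alpha> ?h (A - B - 2 - int k))"
    by (rule ser_poly_mult_mult)
  also have "\<dots> = coeff (v i) a * ser_poly_mult \<alpha> ?h (- B - 1)"
  proof -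
    have "ser_poly_mult \<alpha> ?h (A - B - 2 - int k) = 0" if "k < a" for k
      using w \<open>i \<in> {..<n}\<close> that \<open>A \<le> B\<close>
      by (auto simp: approx_vecs_def fnorm_lt_def a_def)
    then show ?thesis
      using \<open>1 \<le> A\<close> by (simp add: a_def)
  qed
  finally show "ser_poly_mult \<alpha> (v i * ?h) (A - B - 2) = coeff (v i) (nat (A - 1)) * ser_poly_mult \<alpha> ?h (- B - 1)"
    by (simp add: a_def)
qed

lemma bilinear_symmetric:
  fixes v w :: "nat \<Rightarrow> 'a::comm_semiring_1"
  assumes "\<forall>i<n. \<forall>j<n. g i j = g j i"
  shows "(\<Sum>i<n. v i * (\<Sum>j<n. w j * g i j)) = (\<Sum>i<n. w i * (\<Sum>j<n. v j * g i j))"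
proof -
  have "(\<Sum>i<n. v i * (\<Sum>j<n. w j * g i j)) = (\<Sum>i<n. \<Sum>j<n. w j * (v i * g j i))"
    using assms by (simp add: sum_distrib_left mult_ac)
  also have "\<dots> = (\<Sum>i<n. w i * (\<Sum>j<n. v j * g i j))"
    by (subst sum.swap) (simp add: sum_distrib_left)
  finally show ?thesis .
qed

lemma leading_data_isotropic:
  fixes x y :: "nat \<Rightarrow> 'a::comm_semiring_1 poly"
  assumes "\<forall>i<n. \<forall>j<n. g i j = g j i" and "1 \<le> A" and "A \<le> B"
    and x: "x \<in> approx_vecs n \<alpha> g A B" and y: "y \<in> approx_vecs n \<alpha> g A B"
  shows "(\<Sum>i<n. fst (leading_data n \<alpha> g A B x) i * snd (leading_data n \<alpha> g A B y) i)
       = (\<Sum>i<n. fst (leading_data n \<alpha> g A B y) i * snd (leading_data n \<alpha> g A B x) i)"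
proof -
  have "x \<in> bounded_vecs n A" "y \<in> bounded_vecs n A"
    using x y by (simp_all add: approx_vecs_def)
  then show ?thesis
    using approx_vecs_pairing[OF assms(2,3), of x n y \<alpha> g] approx_vecs_pairing[OF assms(2,3), of y n x \<alpha> g]
      bilinear_symmetric[OF assms(1), of x y] x y
    by (simp add: leading_data_def)
qed

lemma card_leading_data_image_le:
  fixes \<alpha> :: "int \<Rightarrow> 'a::{finite,field}"
  assumes sym: "\<forall>i<n. \<forall>j<n. g i j = g j i" and "1 \<le> A" and "A \<le> B"
  shows "card (leading_data n \<alpha> g A B ` approx_vecs n \<alpha> g A B) \<le> card (UNIV :: 'a set) ^ n"
proof (rule card_isotropic_le)
  let ?\<Phi> = "leading_data n \<alpha> g A B" and ?S = "approx_vecs n \<alpha> g A B"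
  show "?\<Phi> ` ?S \<subseteq> coord_space n \<times> coord_space n"
    by (rule image_subsetI) (rule leading_data_in_coord_space)
  show "w + v \<in> ?\<Phi> ` ?S" if "w \<in> ?\<Phi> ` ?S" "v \<in> ?\<Phi> ` ?S" for w v
    using that by (auto simp flip: leading_data_add intro!: imageI approx_vecs_add)
  show "((\<lambda>i. c * fst w i), (\<lambda>i. c * snd w i)) \<in> ?\<Phi> ` ?S" if "w \<in> ?\<Phi> ` ?S" for c w
    using that by (auto simp flip: leading_data_smult intro!: imageI approx_vecs_smult)
  show "(\<Sum>i<n. fst w i * snd v i) = (\<Sum>i<n. fst v i * snd w i)" if "w \<in> ?\<Phi> ` ?S" "v \<in> ?\<Phi> ` ?S" for w v
    using that leading_data_isotropic[OF assms] by auto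
qed

lemma approx_vecs_nonpos:
  assumes "A \<le> 0"
  shows "approx_vecs n \<alpha> g A B = {0}"
proof -
  have "v = 0" if "v \<in> approx_vecs n \<alpha> g A B" for v
  proof (rule ext)
    fix j show "v j = 0 j"
      using that assms by (cases "j < n") (auto simp: approx_vecs_def bounded_vecs_def deg_lt_nonpos)
  qed
  then show ?thesis
    using zero_in_approx_vecs by blast
qed

lemma card_approx_vecs_shrink:
  fixes \<alpha> :: "int \<Rightarrow> 'a::{finite,field}"
  assumes sym: "\<forall>i<n. \<forall>j<n. g i j = g j i" and "A \<le> B"
  shows "card (approx_vecs n \<alpha> g A B) \<le> card (UNIV :: 'a set) ^ n * card (approx_vecs n \<alpha> g (A - 1) (B + 1))"
proof (cases "1 \<le> A")
  case False
  have "1 \<le> card (approx_vecs n \<alpha> g (A - 1) (B + 1))"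
    using zero_in_approx_vecs finite_approx_vecs by (metis One_nat_def Suc_leI card_gt_0_iff empty_iff)
  moreover have "1 \<le> card (UNIV :: 'a set) ^ n"
    by (intro one_le_power) (simp add: Suc_le_eq card_gt_0_iff)
  ultimately show ?thesis
    using False by (simp add: approx_vecs_nonpos)
next
  case True
  let ?\<Phi> = "leading_data n \<alpha> g A B"
  have "card (approx_vecs n \<alpha> g A B)
      \<le> card (?\<Phi> ` approx_vecs n \<alpha> g A B) * card (approx_vecs n \<alpha> g (A - 1) (B + 1))"
    by (intro card_le_card_image_mult_card finite_approx_vecs) (simp add: leading_data_eq_imp_diff_mem)
  also have "card (?\<Phi> ` approx_vecs n \<alpha> g A B) \<le> card (UNIV :: 'a set) ^ n"
    using sym True \<open>A \<le> B\<close> by (rule card_leading_data_image_le)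
  finally show ?thesis
    by (simp add: mult.commute)
qed

section \<open>The polarised form and its slots\<close>

text \<open>\<open>Gamma_form d n c Z\<close> is \<open>\<Gamma>\<^sub>f(Z 0, \<dots>, Z (d - 1))\<close> for the form with coefficient tensor \<open>c\<close>.\<close>

definition Gamma_form :: "nat \<Rightarrow> nat \<Rightarrow> (nat list \<Rightarrow> 'a::comm_semiring_1) \<Rightarrow> (nat \<Rightarrow> nat \<Rightarrow> 'a poly) \<Rightarrow> 'a poly" where
  "Gamma_form d n c Z = (\<Sum>ls\<in>idx d n. smult (c ls) (\<Prod>t<d. Z t (ls ! t)))"

definition unit_vec :: "nat \<Rightarrow> nat \<Rightarrow> 'a::comm_semiring_1 poly" where
  "unit_vec i = (\<lambda>j. if j = i then 1 else 0)"

lemma Gamma_form_cong: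
  "(\<And>t. t < d \<Longrightarrow> Z t = Z' t) \<Longrightarrow> Gamma_form d n c Z = Gamma_form d n c Z'"
  unfolding Gamma_form_def by (intro sum.cong refl arg_cong[where f = "smult _"] prod.cong) auto

lemma Gamma_form_linear:
  fixes Z :: "nat \<Rightarrow> nat \<Rightarrow> 'a::comm_semiring_1 poly"
  assumes "s < d"
  shows "Gamma_form d n c (Z(s := v)) = (\<Sum>j<n. v j * Gamma_form d n c (Z(s := unit_vec j)))"
proof -
  define R where "R ls = (\<Prod>t\<in>{..<d} - {s}. Z t (ls ! t))" for ls
  have remove_s: "(\<Prod>t<d. (Z(s := w)) t (ls ! t)) = w (ls ! s) * R ls" for w and ls :: "nat list"
  proof -
    have "(\<Prod>t<d. (Z(s := w)) t (ls ! t)) = w (ls ! s) * (\<Prod>t\<in>{..<d} - {s}. (Z(s := w)) t (ls ! t))"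
      using assms by (subst prod.remove[of _ s]) auto
    also have "(\<Prod>t\<in>{..<d} - {s}. (Z(s := w)) t (ls ! t)) = R ls"
      unfolding R_def by (intro prod.cong) auto
    finally show ?thesis .
  qed
  have delta: "(\<Sum>j<n. v j * (unit_vec j (ls ! s) * R ls)) = v (ls ! s) * R ls" if "ls \<in> idx d n" for ls
  proof -
    have "ls ! s < n"
      using that assms by (auto simp: idx_def)
    have "(\<Sum>j<n. v j * (unit_vec j (ls ! s) * R ls)) = (\<Sum>j<n. if j = ls ! s then v j * R ls else 0)"
      by (intro sum.cong) (auto simp: unit_vec_def)
    then show ?thesis
      using \<open>ls ! s < n\<close> by simp
  qed
  have "(\<Sum>j<n. v j * Gamma_form d n c (Z(s := unit_vec j)))
      = (\<Sum>ls\<in>idx d n. smult (c ls) (\<Sum>j<n. v j * (unit_vec j (ls ! s) * R ls)))"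
    unfolding Gamma_form_def remove_s
    by (simp add: sum_distrib_left smult_sum_distrib mult.left_commute flip: sum.swap[of _ "{..<n}"])
  also have "\<dots> = Gamma_form d n c (Z(s := v))"
    unfolding Gamma_form_def remove_s by (intro sum.cong refl) (simp add: delta)
  finally show ?thesis ..
qed

lemma prod_permute_list_inv:
  fixes f :: "nat \<Rightarrow> 'b \<Rightarrow> 'c::comm_monoid_mult"
  assumes \<pi>: "\<pi> permutes {..<length xs}"
  shows "(\<Prod>t<length xs. f t (permute_list (inv_into UNIV \<pi>) xs ! t)) = (\<Prod>t<length xs. f (\<pi> t) (xs ! t))"
proof -
  let ?\<sigma> = "inv_into UNIV \<pi>"
  have "(\<Prod>t<length xs. f t (permute_list ?\<sigma> xs ! t)) = (\<Prod>t<length xs. f (\<pi> t) (permute_list ?\<sigma> xs ! \<pi> t))"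
    using prod.permute[OF \<pi>, of "\<lambda>t. f t (permute_list ?\<sigma> xs ! t)"] by simp
  also have "\<dots> = (\<Prod>t<length xs. f (\<pi> t) (xs ! t))"
  proof (rule prod.cong[OF refl])
    fix t assume "t \<in> {..<length xs}"
    then have "\<pi> t < length xs"
      using permutes_in_image[OF \<pi>] by simp
    then show "f (\<pi> t) (permute_list ?\<sigma> xs ! \<pi> t) = f (\<pi> t) (xs ! t)"
      using permute_list_nth[OF permutes_inv[OF \<pi>]] permutes_inverses(2)[OF \<pi>] by simp
  qed
  finally show ?thesis .
qed

lemma bij_betw_permute_list_idx:
  assumes p: "p permutes {..<d}"
  shows "bij_betw (permute_list p) (idx d n) (idx d n)"
proof (rule bij_betw_byWitness[where f' = "permute_list (inv_into UNIV p)"])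
  have q: "inv_into UNIV p permutes {..<d}"
    using p by (rule permutes_inv)
  have idx: "permute_list r ls \<in> idx d n" if "r permutes {..<d}" "ls \<in> idx d n" for r ls
    using that by (auto simp: idx_def)
  have inverse: "permute_list r' (permute_list r ls) = ls"
    if "r' permutes {..<d}" "r \<circ> r' = id" "ls \<in> idx d n" for r r' ls
    using permute_list_compose[of r' ls r] that by (simp add: idx_def)
  show "\<forall>ls\<in>idx d n. permute_list (inv_into UNIV p) (permute_list p ls) = ls"
    using inverse[OF q] permutes_inv_o(1)[OF p] by simp
  show "\<forall>ls\<in>idx d n. permute_list p (permute_list (inv_into UNIV p) ls) = ls"
    using inverse[OF p] permutes_inv_o(2)[OF p] by simp
  show "permute_list p ` idx d n \<subseteq> idx d n" "permute_list (inv_into UNIV p) ` idx d n \<subseteq> idx d n"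
    using idx[OF p] idx[OF q] by auto
qed

lemma Gamma_form_permute:
  fixes Z :: "nat \<Rightarrow> nat \<Rightarrow> 'a::comm_semiring_1 poly"
  assumes \<pi>: "\<pi> permutes {..<d}" and sym: "sym_coeffs d n c"
  shows "Gamma_form d n c (Z \<circ> \<pi>) = Gamma_form d n c Z"
proof -
  let ?\<sigma> = "inv_into UNIV \<pi>"
  have \<sigma>: "?\<sigma> permutes {..<d}"
    using \<pi> by (rule permutes_inv)
  have bij: "bij_betw (permute_list ?\<sigma>) (idx d n) (idx d n)"
    using \<sigma> by (rule bij_betw_permute_list_idx)
  have "smult (c ls) (\<Prod>t<d. Z (\<pi> t) (ls ! t))
      = smult (c (permute_list ?\<sigma> ls)) (\<Prod>t<d. Z t (permute_list ?\<sigma> ls ! t))"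
    if ls: "ls \<in> idx d n" for ls
  proof -
    have len: "length ls = d"
      using ls by (simp add: idx_def)
    have "permute_list ?\<sigma> ls \<in> idx d n"
      using bij_betwE[OF bij] ls by blast
    moreover have "mset (permute_list ?\<sigma> ls) = mset ls"
      using mset_permute_list[of ?\<sigma> ls] \<sigma> len by simp
    ultimately have "c (permute_list ?\<sigma> ls) = c ls"
      using sym ls unfolding sym_coeffs_def by blast
    moreover have "(\<Prod>t<d. Z t (permute_list ?\<sigma> ls ! t)) = (\<Prod>t<d. Z (\<pi> t) (ls ! t))"
      using prod_permute_list_inv[of \<pi> ls Z] \<pi> len by simp
    ultimately show ?thesis
      by simp
  qed
  then have "Gamma_form d n c (Z \<circ> \<pi>)
      = (\<Sum>ls\<in>idx d n. smult (c (permute_list ?\<sigma> ls)) (\<Prod>t<d. Z t (permute_list ?\<sigma> ls ! t)))"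
    unfolding Gamma_form_def by (intro sum.cong refl) simp
  also have "\<dots> = Gamma_form d n c Z"
    unfolding Gamma_form_def using bij by (rule sum.reindex_bij_betw)
  finally show ?thesis .
qed

definition approx_tuples ::
  "nat \<Rightarrow> nat \<Rightarrow> (int \<Rightarrow> 'a::comm_semiring_1) \<Rightarrow> (nat list \<Rightarrow> 'a) \<Rightarrow> (nat \<Rightarrow> int) \<Rightarrow> int
     \<Rightarrow> (nat \<Rightarrow> nat \<Rightarrow> 'a poly) set"
where
  "approx_tuples m n \<alpha> c b E = {Z. (\<forall>t<m. Z t \<in> bounded_vecs n (b t)) \<and> (\<forall>t\<ge>m. Z t = 0) \<and>
     (\<forall>i<n. fnorm_lt \<alpha> (Gamma_form (Suc m) n c (Z(m := unit_vec i))) E)}"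

definition tuples_zero_at :: "nat \<Rightarrow> nat \<Rightarrow> (nat \<Rightarrow> int) \<Rightarrow> nat \<Rightarrow> (nat \<Rightarrow> nat \<Rightarrow> 'a::zero poly) set" where
  "tuples_zero_at m n b s =
     {Z. Z s = 0 \<and> (\<forall>t<m. t \<noteq> s \<longrightarrow> Z t \<in> bounded_vecs n (b t)) \<and> (\<forall>t\<ge>m. Z t = 0)}"

definition slot_matrix ::
  "nat \<Rightarrow> nat \<Rightarrow> (nat list \<Rightarrow> 'a::comm_semiring_1) \<Rightarrow> (nat \<Rightarrow> nat \<Rightarrow> 'a poly) \<Rightarrow> nat \<Rightarrow> nat \<Rightarrow> nat \<Rightarrow> 'a poly"
where
  "slot_matrix m n c Z s i j = Gamma_form (Suc m) n c ((Z(s := unit_vec j))(m := unit_vec i))"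

lemma approx_tuples_cong:
  assumes "\<And>t. t < m \<Longrightarrow> b t = b' t"
  shows "approx_tuples m n \<alpha> c b E = approx_tuples m n \<alpha> c b' E"
proof -
  have "Z \<in> approx_tuples m n \<alpha> c b E \<longleftrightarrow> Z \<in> approx_tuples m n \<alpha> c b' E" for Z
    using assms by (simp add: approx_tuples_def)
  then show ?thesis
    by blast
qed

lemma Gamma_form_slot:
  fixes Z :: "nat \<Rightarrow> nat \<Rightarrow> 'a::comm_semiring_1 poly"
  assumes "s < m"
  shows "Gamma_form (Suc m) n c ((Z(s := v))(m := unit_vec i)) = (\<Sum>j<n. v j * slot_matrix m n c Z s i j)"
proof -
  have "Gamma_form (Suc m) n c ((Z(s := v))(m := unit_vec i)) = Gamma_form (Suc m) n c ((Z(m := unit_vec i))(s := v))"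
    using assms by (simp add: fun_upd_twist)
  also have "\<dots> = (\<Sum>j<n. v j * Gamma_form (Suc m) n c ((Z(m := unit_vec i))(s := unit_vec j)))"
    using assms by (intro Gamma_form_linear) simp
  also have "\<dots> = (\<Sum>j<n. v j * slot_matrix m n c Z s i j)"
    using assms by (simp add: slot_matrix_def fun_upd_twist)
  finally show ?thesis .
qed

text \<open>Swapping slot \<open>s\<close> with the slot holding \<open>e\<^sub>i\<close> is a symmetry of \<open>\<Gamma>\<^sub>f\<close>.\<close>

lemma slot_matrix_sym:
  assumes "s < m" and "sym_coeffs (Suc m) n c"
  shows "slot_matrix m n c Z s i j = slot_matrix m n c Z s j i"
proof -
  have "((Z(s := unit_vec j))(m := unit_vec i)) \<circ> transpose s m = (Z(s := unit_vec i))(m := unit_vec j)"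
    using assms(1) by (auto simp: fun_eq_iff transpose_def)
  moreover have "transpose s m permutes {..<Suc m}"
    using assms(1) by (intro permutes_swap_id) auto
  ultimately show ?thesis
    unfolding slot_matrix_def by (metis Gamma_form_permute assms(2))
qed

lemma fun_upd_in_approx_tuples_iff:
  assumes "s < m" and W: "W \<in> tuples_zero_at m n b s"
  shows "W(s := v) \<in> approx_tuples m n \<alpha> c (b(s := A)) (- B)
     \<longleftrightarrow> v \<in> approx_vecs n \<alpha> (slot_matrix m n c W s) A B"
proof -
  have bounds: "(\<forall>t<m. (W(s := v)) t \<in> bounded_vecs n ((b(s := A)) t)) \<and> (\<forall>t\<ge>m. (W(s := v)) t = 0)
      \<longleftrightarrow> v \<in> bounded_vecs n A"
    using assms by (auto simp: tuples_zero_at_def)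
  have forms: "(\<forall>i<n. fnorm_lt \<alpha> (Gamma_form (Suc m) n c ((W(s := v))(m := unit_vec i))) (- B))
      \<longleftrightarrow> (\<forall>i<n. fnorm_lt \<alpha> (\<Sum>j<n. v j * slot_matrix m n c W s i j) (- B))"
    using assms(1) by (simp add: Gamma_form_slot)
  show ?thesis
    unfolding approx_tuples_def approx_vecs_def mem_Collect_eq conj_assoc[symmetric] bounds forms ..
qed

lemma approx_tuples_eq_image:
  assumes "s < m"
  shows "approx_tuples m n \<alpha> c (b(s := A)) (- B)
       = (\<lambda>(W, v). W(s := v)) ` (SIGMA W:tuples_zero_at m n b s. approx_vecs n \<alpha> (slot_matrix m n c W s) A B)"
    (is "?T = ?image")
proof
  show "?image \<subseteq> ?T"
    by (auto simp: fun_upd_in_approx_tuples_iff[OF assms])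
  show "?T \<subseteq> ?image"
  proof
    fix Z assume Z: "Z \<in> ?T"
    have W: "Z(s := 0) \<in> tuples_zero_at m n b s"
      using Z assms by (auto simp: approx_tuples_def tuples_zero_at_def)
    then have "Z s \<in> approx_vecs n \<alpha> (slot_matrix m n c (Z(s := 0)) s) A B"
      using Z fun_upd_in_approx_tuples_iff[OF assms W, of "Z s"] by simp
    then show "Z \<in> ?image"
      using W by (intro image_eqI[of _ _ "(Z(s := 0), Z s)"]) auto
  qed
qed

lemma finite_tuples_zero_at:
  "finite (tuples_zero_at m n b s :: (nat \<Rightarrow> nat \<Rightarrow> 'a::{finite,zero} poly) set)"
proof (rule finite_subset)
  let ?V = "\<Union>t<m. bounded_vecs n (b t) :: (nat \<Rightarrow> 'a poly) set"
  show "tuples_zero_at m n b s \<subseteq> {Z. \<forall>t. (t \<in> {..<m} \<longrightarrow> Z t \<in> ?V) \<and> (t \<notin> {..<m} \<longrightarrow> Z t = 0)}"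
  proof (rule subsetI, rule CollectI)
    fix Z :: "nat \<Rightarrow> nat \<Rightarrow> 'a poly" assume Z: "Z \<in> tuples_zero_at m n b s"
    have "Z t \<in> ?V" if "t < m" for t
      using Z that by (cases "t = s") (auto simp: tuples_zero_at_def bounded_vecs_def)
    then show "\<forall>t. (t \<in> {..<m} \<longrightarrow> Z t \<in> ?V) \<and> (t \<notin> {..<m} \<longrightarrow> Z t = 0)"
      using Z by (auto simp: tuples_zero_at_def)
  qed
qed (intro finite_set_of_finite_funs finite_lessThan finite_UN_I finite_bounded_vecs)

lemma card_approx_tuples_eq_sum:
  fixes \<alpha> :: "int \<Rightarrow> 'a::{finite,comm_semiring_1}"
  assumes "s < m"
  shows "card (approx_tuples m n \<alpha> c (b(s := A)) (- B))
       = (\<Sum>W\<in>tuples_zero_at m n b s. card (approx_vecs n \<alpha> (slot_matrix m n c W s) A B))"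
proof -
  have inj: "inj_on (\<lambda>(W, v). W(s := v)) (SIGMA W:tuples_zero_at m n b s. approx_vecs n \<alpha> (slot_matrix m n c W s) A B)"
  proof (rule inj_onI, clarify)
    fix W W' :: "nat \<Rightarrow> nat \<Rightarrow> 'a poly" and v v' :: "nat \<Rightarrow> 'a poly"
    assume W: "W \<in> tuples_zero_at m n b s" "W' \<in> tuples_zero_at m n b s"
      and eq: "W(s := v) = W'(s := v')"
    have "W t = W' t" for t
      using fun_cong[OF eq, of t] W by (cases "t = s") (auto simp: tuples_zero_at_def)
    moreover have "v = v'"
      using fun_cong[OF eq, of s] by simp
    ultimately show "W = W' \<and> v = v'"
      by auto
  qed
  show ?thesis
    unfolding approx_tuples_eq_image[OF assms] card_image[OF inj]
    by (rule card_SigmaI) (simp_all add: finite_tuples_zero_at finite_approx_vecs)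
qed

lemma card_approx_tuples_shrink_slot:
  fixes \<alpha> :: "int \<Rightarrow> 'a::{finite,field}"
  assumes s: "s < m" and sym: "sym_coeffs (Suc m) n c" and "b s \<le> - E"
  shows "card (approx_tuples m n \<alpha> c b E)
       \<le> card (UNIV :: 'a set) ^ n * card (approx_tuples m n \<alpha> c (b(s := b s - 1)) (E - 1))"
proof -
  have T: "approx_tuples m n \<alpha> c b E = approx_tuples m n \<alpha> c (b(s := b s)) (- (- E))"
    by simp
  have E: "E - 1 = - (- E + 1)"
    by simp
  have "card (approx_tuples m n \<alpha> c b E)
      = (\<Sum>W\<in>tuples_zero_at m n b s. card (approx_vecs n \<alpha> (slot_matrix m n c W s) (b s) (- E)))"
    unfolding T by (rule card_approx_tuples_eq_sum[OF s])
  also have "\<dots> \<le> (\<Sum>W\<in>tuples_zero_at m n b s.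
      card (UNIV :: 'a set) ^ n * card (approx_vecs n \<alpha> (slot_matrix m n c W s) (b s - 1) (- E + 1)))"
    using slot_matrix_sym[OF s sym] \<open>b s \<le> - E\<close> by (intro sum_mono card_approx_vecs_shrink) auto
  also have "\<dots> = card (UNIV :: 'a set) ^ n * card (approx_tuples m n \<alpha> c (b(s := b s - 1)) (E - 1))"
    unfolding E card_approx_tuples_eq_sum[OF s] by (simp add: sum_distrib_left)
  finally show ?thesis .
qed

lemma card_approx_tuples_shrink:
  fixes \<alpha> :: "int \<Rightarrow> 'a::{finite,field}" and k :: "nat \<Rightarrow> nat"
  assumes sym: "sym_coeffs (Suc m) n c" and bound: "\<forall>t<m. b t \<le> - E"
  shows "card (approx_tuples m n \<alpha> c b E)
       \<le> card (UNIV :: 'a set) ^ (n * (\<Sum>t<m. k t))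
         * card (approx_tuples m n \<alpha> c (\<lambda>t. b t - int (k t)) (E - int (\<Sum>t<m. k t)))"
proof (induction "\<Sum>t<m. k t" arbitrary: k)
  case 0
  then have "approx_tuples m n \<alpha> c (\<lambda>t. b t - int (k t)) E = approx_tuples m n \<alpha> c b E"
    by (intro approx_tuples_cong) simp
  then show ?case
    using 0 by simp
next
  case (Suc N)
  then obtain s where s: "s < m" "k s \<noteq> 0"
    by (metis lessThan_iff nat.simps(3) sum.neutral)
  define k' where "k' = k(s := k s - 1)"
  have remove_s: "(\<Sum>t<m. f t) = f s + (\<Sum>t\<in>{..<m} - {s}. f t)" for f :: "nat \<Rightarrow> nat"
    using s(1) by (simp add: sum.remove)
  have N: "(\<Sum>t<m. k' t) = N"
    using remove_s[of k] remove_s[of k'] Suc.hyps(2) s(2) by (simp add: k'_def)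
  define b' where "b' = (\<lambda>t. b t - int (k' t))"
  have "b s \<le> - E"
    using bound s(1) by simp
  then have bs: "b' s \<le> - (E - int N)"
    using s(2) by (simp add: b'_def k'_def)
  have upd: "b'(s := b' s - 1) = (\<lambda>t. b t - int (k t))"
    using s(2) by (simp add: b'_def k'_def fun_eq_iff)
  have E: "E - int N - 1 = E - int (Suc N)"
    by simp
  have step: "card (approx_tuples m n \<alpha> c b' (E - int N))
      \<le> card (UNIV :: 'a set) ^ n * card (approx_tuples m n \<alpha> c (\<lambda>t. b t - int (k t)) (E - int (Suc N)))"
    using card_approx_tuples_shrink_slot[OF s(1) sym, where b = b' and E = "E - int N"] bs unfolding upd E by simp
  have "card (approx_tuples m n \<alpha> c b E)
      \<le> card (UNIV :: 'a set) ^ (n * N) * card (approx_tuples m n \<alpha> c b' (E - int N))"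
    using Suc.hyps(1)[of k'] N by (simp add: b'_def)
  also have "\<dots> \<le> card (UNIV :: 'a set) ^ (n * N)
      * (card (UNIV :: 'a set) ^ n * card (approx_tuples m n \<alpha> c (\<lambda>t. b t - int (k t)) (E - int (Suc N))))"
    using step by simp
  finally show ?case
    by (simp add: Suc.hyps(2)[symmetric] power_add mult_ac)
qed

section \<open>The counting functions of the statement\<close>

lemma prod_lessThan_add:
  fixes f :: "nat \<Rightarrow> 'a::comm_monoid_mult"
  shows "(\<Prod>t<a + b. f t) = (\<Prod>t<a. f t) * (\<Prod>t<b. f (a + t))"
  by (induction b) (simp_all add: mult.assoc)

lemma GammaG_eq_smult_Gamma_form:
  fixes c :: "nat list \<Rightarrow> 'a::comm_ring_1"
  assumes "\<forall>js\<in>idx d1 n. \<forall>ks\<in>idx d2 n. Gc js ks = C0 * c (js @ ks)"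
  shows "GammaG n d1 d2 Gc Xv Yv = smult C0 (Gamma_form (d1 + d2) n c (\<lambda>t. if t < d1 then Xv t else Yv (t - d1)))"
proof -
  define Z where "Z = (\<lambda>t. if t < d1 then Xv t else Yv (t - d1))"
  have prod: "(\<Prod>t<d1 + d2. Z t ((js @ ks) ! t)) = (\<Prod>t<d1. Xv t (js ! t)) * (\<Prod>t<d2. Yv t (ks ! t))"
    if "js \<in> idx d1 n" for js ks
    using that by (simp add: prod_lessThan_add Z_def nth_append idx_def)
  have "GammaG n d1 d2 Gc Xv Yv
      = (\<Sum>(js, ks)\<in>idx d1 n \<times> idx d2 n. smult C0 (smult (c (js @ ks)) (\<Prod>t<d1 + d2. Z t ((js @ ks) ! t))))"
    unfolding GammaG_def sum.cartesian_product using assms by (intro sum.cong refl) (auto simp: prod)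
  also have "\<dots> = (\<Sum>ls\<in>idx (d1 + d2) n. smult C0 (smult (c ls) (\<Prod>t<d1 + d2. Z t (ls ! t))))"
    by (rule sum.reindex_bij_witness[where i = "\<lambda>ls. (take d1 ls, drop d1 ls)" and j = "\<lambda>(js, ks). js @ ks"])
      (auto simp: idx_def dest: in_set_takeD in_set_dropD)
  also have "\<dots> = smult C0 (Gamma_form (d1 + d2) n c Z)"
    by (simp add: Gamma_form_def smult_sum_distrib)
  finally show ?thesis
    by (simp add: Z_def)
qed

definition join_tuple ::
  "nat \<Rightarrow> nat \<Rightarrow> (nat \<Rightarrow> nat \<Rightarrow> 'a::zero poly) \<Rightarrow> (nat \<Rightarrow> nat \<Rightarrow> 'a poly) \<Rightarrow> nat \<Rightarrow> nat \<Rightarrow> 'a poly"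
where
  "join_tuple d1 d2 Xv Yv = (\<lambda>t. if t < d1 then Xv t else if t < d1 + d2 - 1 then Yv (t - d1) else 0)"

lemma GammaG_ext_unit_eq:
  fixes c :: "nat list \<Rightarrow> 'a::comm_ring_1"
  assumes "1 \<le> d2" and "\<forall>js\<in>idx d1 n. \<forall>ks\<in>idx d2 n. Gc js ks = C0 * c (js @ ks)"
  shows "GammaG n d1 d2 Gc Xv (ext_unit d2 Yv i)
       = smult C0 (Gamma_form (Suc (d1 + d2 - 1)) n c ((join_tuple d1 d2 Xv Yv)(d1 + d2 - 1 := unit_vec i)))"
proof -
  have "Gamma_form (d1 + d2) n c (\<lambda>t. if t < d1 then Xv t else ext_unit d2 Yv i (t - d1))
      = Gamma_form (d1 + d2) n c ((join_tuple d1 d2 Xv Yv)(d1 + d2 - 1 := unit_vec i))"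
    using assms(1) by (intro Gamma_form_cong) (auto simp: join_tuple_def ext_unit_def unit_vec_def fun_eq_iff)
  then show ?thesis
    using GammaG_eq_smult_Gamma_form[OF assms(2)] assms(1) by simp
qed

lemma fnorm_lt_smult_iff:
  fixes \<alpha> :: "int \<Rightarrow> 'a::field"
  assumes "a \<noteq> 0"
  shows "fnorm_lt \<alpha> (smult a g) E \<longleftrightarrow> fnorm_lt \<alpha> g E"
  using assms by (simp add: fnorm_lt_def ser_poly_mult_smult)

lemma vecs_bounded_iff:
  "vecs_bounded m n B Xv \<longleftrightarrow> (\<forall>t<m. Xv t \<in> bounded_vecs n B) \<and> (\<forall>t\<ge>m. Xv t = 0)"
  unfolding vecs_bounded_def bounded_vecs_def deg_lt_iff
  by (auto simp: fun_eq_iff) (metis not_less)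

lemma join_tuple_in_approx_tuples_iff:
  fixes c :: "nat list \<Rightarrow> 'a::field"
  assumes "1 \<le> d2" and "\<forall>js\<in>idx d1 n. \<forall>ks\<in>idx d2 n. Gc js ks = C0 * c (js @ ks)" and "C0 \<noteq> 0"
  shows "join_tuple d1 d2 Xv Yv \<in> approx_tuples (d1 + d2 - 1) n \<alpha> c (\<lambda>t. if t < d1 then B1 else B2) E
     \<longleftrightarrow> (\<forall>t<d1. Xv t \<in> bounded_vecs n B1) \<and> (\<forall>t<d2 - 1. Yv t \<in> bounded_vecs n B2) \<and>
         (\<forall>i<n. fnorm_lt \<alpha> (GammaG n d1 d2 Gc Xv (ext_unit d2 Yv i)) E)"
proof -
  have "(\<forall>t<d1 + d2 - 1. join_tuple d1 d2 Xv Yv t \<in> bounded_vecs n (if t < d1 then B1 else B2))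
      \<longleftrightarrow> (\<forall>t<d1. Xv t \<in> bounded_vecs n B1) \<and> (\<forall>t<d2 - 1. Yv t \<in> bounded_vecs n B2)"
  proof (intro iffI conjI allI impI)
    assume H: "\<forall>t<d1 + d2 - 1. join_tuple d1 d2 Xv Yv t \<in> bounded_vecs n (if t < d1 then B1 else B2)"
    show "Xv t \<in> bounded_vecs n B1" if "t < d1" for t
      using H[rule_format, of t] that assms(1) by (simp add: join_tuple_def)
    show "Yv t \<in> bounded_vecs n B2" if "t < d2 - 1" for t
      using H[rule_format, of "d1 + t"] that by (simp add: join_tuple_def)
  qed (auto simp: join_tuple_def)
  moreover have "\<forall>t\<ge>d1 + d2 - 1. join_tuple d1 d2 Xv Yv t = 0"
    using assms(1) by (auto simp: join_tuple_def)
  ultimately show ?thesis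
    unfolding approx_tuples_def mem_Collect_eq GammaG_ext_unit_eq[OF assms(1,2)] fnorm_lt_smult_iff[OF assms(3)]
    by simp
qed

lemma count_N_eq_card_approx_tuples:
  fixes c :: "nat list \<Rightarrow> 'a::field"
  assumes "1 \<le> d2" and "\<forall>js\<in>idx d1 n. \<forall>ks\<in>idx d2 n. Gc js ks = C0 * c (js @ ks)" and "C0 \<noteq> 0"
  shows "count_N n d1 d2 Gc \<alpha> B1 B2 E
       = card (approx_tuples (d1 + d2 - 1) n \<alpha> c (\<lambda>t. if t < d1 then B1 else B2) E)"
proof -
  define T where "T = approx_tuples (d1 + d2 - 1) n \<alpha> c (\<lambda>t. if t < d1 then B1 else B2) E"
  define CS where "CS = {(Xv, Yv). vecs_bounded d1 n B1 Xv \<and> vecs_bounded (d2 - 1) n B2 Yv \<and>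
      (\<forall>i<n. fnorm_lt \<alpha> (GammaG n d1 d2 Gc Xv (ext_unit d2 Yv i)) E)}"
  define unjoin where "unjoin Z = ((\<lambda>t. if t < d1 then Z t else 0), (\<lambda>t. if t < d2 - 1 then Z (d1 + t) else 0))"
    for Z :: "nat \<Rightarrow> nat \<Rightarrow> 'a poly"
  note join_iff = join_tuple_in_approx_tuples_iff[OF assms]
  have join_unjoin: "join_tuple d1 d2 (fst (unjoin Z)) (snd (unjoin Z)) = Z" if "Z \<in> T" for Z
    using that assms(1) by (auto simp: T_def approx_tuples_def unjoin_def join_tuple_def fun_eq_iff)
  have "bij_betw (\<lambda>(Xv, Yv). join_tuple d1 d2 Xv Yv) CS T"
  proof (rule bij_betw_byWitness[where f' = unjoin])
    show "\<forall>p\<in>CS. unjoin (case p of (Xv, Yv) \<Rightarrow> join_tuple d1 d2 Xv Yv) = p"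
      by (auto simp: CS_def unjoin_def join_tuple_def vecs_bounded_iff fun_eq_iff)
    show "\<forall>Z\<in>T. (case unjoin Z of (Xv, Yv) \<Rightarrow> join_tuple d1 d2 Xv Yv) = Z"
      by (simp add: join_unjoin case_prod_beta)
    show "(\<lambda>(Xv, Yv). join_tuple d1 d2 Xv Yv) ` CS \<subseteq> T"
    proof clarify
      fix Xv Yv assume "(Xv, Yv) \<in> CS"
      then show "join_tuple d1 d2 Xv Yv \<in> T"
        using join_iff[of Xv Yv] by (simp add: CS_def T_def vecs_bounded_iff)
    qed
    show "unjoin ` T \<subseteq> CS"
    proof (rule image_subsetI)
      fix Z assume "Z \<in> T"
      moreover note join_unjoin[OF \<open>Z \<in> T\<close>]
      ultimately show "unjoin Z \<in> CS"
        using join_iff[of "fst (unjoin Z)" "snd (unjoin Z)"]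
        by (auto simp: CS_def T_def vecs_bounded_iff unjoin_def)
    qed
  qed
  then show ?thesis
    unfolding count_N_def CS_def[symmetric] T_def[symmetric] by (rule bij_betw_same_card)
qed

lemma count_N_shrink:
  fixes c :: "nat list \<Rightarrow> 'a::{finite,field}"
  assumes "1 \<le> d2" and "\<forall>js\<in>idx d1 n. \<forall>ks\<in>idx d2 n. Gc js ks = C0 * c (js @ ks)" and "C0 \<noteq> 0"
    and sym: "sym_coeffs (d1 + d2) n c" and "B1 \<le> - E" and "B2 \<le> - E"
  shows "count_N n d1 d2 Gc \<alpha> B1 B2 E
       \<le> card (UNIV :: 'a set) ^ (n * (d1 * k1 + (d2 - 1) * k2))
         * count_N n d1 d2 Gc \<alpha> (B1 - int k1) (B2 - int k2) (E - int d1 * int k1 - (int d2 - 1) * int k2)"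
proof -
  define m where "m = d1 + d2 - 1"
  define K where "K = d1 * k1 + (d2 - 1) * k2"
  define k where "k t = (if t < d1 then k1 else k2)" for t
  have "sym_coeffs (Suc m) n c"
    using sym assms(1) by (simp add: m_def)
  moreover have "\<forall>t<m. (if t < d1 then B1 else B2) \<le> - E"
    using assms(5,6) by simp
  ultimately have shrink: "card (approx_tuples m n \<alpha> c (\<lambda>t. if t < d1 then B1 else B2) E)
      \<le> card (UNIV :: 'a set) ^ (n * (\<Sum>t<m. k t))
        * card (approx_tuples m n \<alpha> c (\<lambda>t. (if t < d1 then B1 else B2) - int (k t)) (E - int (\<Sum>t<m. k t)))"
    by (rule card_approx_tuples_shrink)
  have bounds: "(\<lambda>t. (if t < d1 then B1 else B2) - int (k t)) = (\<lambda>t. if t < d1 then B1 - int k1 else B2 - int k2)"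
    by (simp add: k_def fun_eq_iff)
  have "{..<m} \<inter> {t. t < d1} = {..<d1}" "{..<m} \<inter> - {t. t < d1} = {d1..<m}"
    using assms(1) by (auto simp: m_def)
  then have sum: "(\<Sum>t<m. k t) = K"
    using assms(1) by (simp add: k_def sum.If_cases m_def K_def)
  have "int K = int d1 * int k1 + (int d2 - 1) * int k2"
    using assms(1) by (simp add: K_def)
  then have EK: "E - int d1 * int k1 - (int d2 - 1) * int k2 = E - int K"
    by linarith
  from shrink show ?thesis
    unfolding count_N_eq_card_approx_tuples[OF assms(1-3)] EK K_def[symmetric] m_def[symmetric]
      bounds sum .
qed

theorem lemma4p4:
  fixes c :: "nat list \<Rightarrow> 'a::{finite,field}"
    and Gc :: "nat list \<Rightarrow> nat list \<Rightarrow> 'a"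
    and C0 :: 'a
    and \<alpha> :: "int \<Rightarrow> 'a"
    and d1 d2 n :: nat and P1 P2 Q1 Q2 :: int
  assumes "d1 + d2 \<ge> 2" and "d2 \<ge> 1"
    and "CHAR('a) > d1 + d2"
    and "n \<ge> 1"
    and "1 \<le> P1" and "P1 \<le> P2" and "d1 = 0 \<longrightarrow> P1 = P2"
    and "C0 \<noteq> 0"
    and "sym_coeffs (d1 + d2) n c"
    and "nonsingular_form (d1 + d2) n c"
    and "\<forall>js\<in>idx d1 n. \<forall>ks\<in>idx d2 n. Gc js ks = C0 * c (js @ ks)"
    and "in_T \<alpha>"
    and "Q1 \<le> 0" and "Q2 \<le> 0"
  shows "real (N2_0 n d1 d2 Gc P1 P2 \<alpha>)
           \<le> real (card (UNIV :: 'a set)) powi (- (int d1 * Q1 * int n))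
             * real (card (UNIV :: 'a set)) powi (- ((int d2 - 1) * Q2 * int n))
             * real (N1_d1 n d1 d2 Gc P1 P2 Q1 Q2 \<alpha>)"
proof -
  define k1 where "k1 = nat (- Q1)"
  define k2 where "k2 = nat (- Q2)"
  let ?q = "card (UNIV :: 'a set)"
  have "N2_0 n d1 d2 Gc P1 P2 \<alpha> \<le> ?q ^ (n * (d1 * k1 + (d2 - 1) * k2))
      * count_N n d1 d2 Gc \<alpha> (P1 - int k1) (P2 - int k2) (- P2 - int d1 * int k1 - (int d2 - 1) * int k2)"
    unfolding N2_0_def by (rule count_N_shrink) (use assms in auto)
  also have "count_N n d1 d2 Gc \<alpha> (P1 - int k1) (P2 - int k2) (- P2 - int d1 * int k1 - (int d2 - 1) * int k2)
      = N1_d1 n d1 d2 Gc P1 P2 Q1 Q2 \<alpha>"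
    using assms(13,14) by (simp add: N1_d1_def k1_def k2_def algebra_simps)
  finally have "N2_0 n d1 d2 Gc P1 P2 \<alpha> \<le> ?q ^ (n * (d1 * k1 + (d2 - 1) * k2)) * N1_d1 n d1 d2 Gc P1 P2 Q1 Q2 \<alpha>" .
  then have "real (N2_0 n d1 d2 Gc P1 P2 \<alpha>)
      \<le> real ?q ^ (d1 * k1 * n) * real ?q ^ ((d2 - 1) * k2 * n) * real (N1_d1 n d1 d2 Gc P1 P2 Q1 Q2 \<alpha>)"
    unfolding of_nat_le_iff[symmetric, where 'a = real] by (simp add: distrib_left power_add mult_ac)
  moreover have "- (int d1 * Q1 * int n) = int (d1 * k1 * n)"
    and "- ((int d2 - 1) * Q2 * int n) = int ((d2 - 1) * k2 * n)"
    using assms(2,13,14) by (simp_all add: k1_def k2_def)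
  ultimately show ?thesis
    by (simp only: power_int_of_nat)
qed

end
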